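(* For every conditional model $\mathfrak{M}$ satisfying the limit assumption, every world $w$, all formulas $\varphi,\psi$ and every finite set of formulas $\Gamma$: $\mathfrak{M},w\models\varphi\sqsubseteq^\Gamma\psi$ iff $$\mathfrak{M},w\models\bigwedge_{\gamma\in\Gamma^*}\Big(\gamma\rightarrow\bigwedge_{\lambda\subseteq\gamma}\Big[\Big(\bigwedge_{\lambda\subsetneq\lambda'\subseteq\gamma}\neg\Diamond(\varphi\wedge\lambda')\Big)\rightarrow\big((\varphi\wedge\lambda)\preceq(\psi\wedge\lambda)\big)\Big]\Big).$$ Consequently $\sqsubseteq^\Gamma$ is expressible using only $\preceq$ and Boolean connectives.
   Context: A conditional model is $\mathfrak{M}=(W,\preceq,V)$: $W\ne\emptyset$, $V(p)\subseteq W$ for each propositional variable, and for each $w\in W$ a set $W_w\subseteq W$ with $w\in W_w$ and a reflexive, transitive, total relation $\preceq_w$ on $W_w$ with $w\prec_w v$ for all $v\in W_w\setminus\{w\}$; the limit assumption requires these relations (and those below) to be well-founded. $A_\Gamma(u,v)=\{\gamma\in\Gamma:\mathfrak{M},u\models\gamma\iff\mathfrak{M},v\models\gamma\}$; on $W_w$, $u\sqsubseteq^\Gamma_w v$ iff $A_\Gamma(v,w)\subsetneq A_\Gamma(u,w)$, or $A_\Gamma(v,w)=A_\Gamma(u,w)$ and $u\preceq_w v$. $\mathfrak{M},w\models\varphi\preceq\psi$ iff for every $u\in W_w$ with $u\models\psi$ there is $v\in W_w$ with $v\models\varphi$ and $v\preceq_w u$; $\mathfrak{M},w\models\varphi\sqsubseteq^\Gamma\psi$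 is defined the same way with $\sqsubseteq^\Gamma_w$ in place of $\preceq_w$. $\varphi\prec\psi:=\neg(\psi\preceq\varphi)$, $\Diamond\varphi:=\varphi\prec\bot$ (true at $w$ iff some $u\in W_w$ satisfies $\varphi$). $\Gamma^*$ is the set of all conjunctions $\bigwedge_{\gamma\in\Gamma}\pm\gamma$ with each $\pm\gamma\in\{\gamma,\neg\gamma\}$. A conjunction is identified with its set of conjuncts, so $\lambda\subseteq\gamma$ ranges over subsets of the conjuncts of $\gamma$ (treated as conjunctions). *)

theory Defs
  imports Main
begin

text \<open>Formulas of the conditional language with the comparative operator
  Pref (phi preceq psi) and the Gamma-relativised operator Sq G phi psi
  (phi sqsubseteq^Gamma psi), where the finite set Gamma is given by a list.\<close>

datatype form =
    Var nat
  | Bot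
  | Neg form
  | And form form
  | Imp form form
  | Pref form form
  | Sq "form list" form form

definition Top :: form where "Top = Neg Bot"

definition Prec :: "form \<Rightarrow> form \<Rightarrow> form" where
  "Prec f g = Neg (Pref g f)"

definition Dia :: "form \<Rightarrow> form" where
  "Dia f = Prec f Bot"

definition Conj :: "form list \<Rightarrow> form" where
  "Conj xs = foldr And xs Top"

record 'w cmodel =
  Wo  :: "'w set"
  Ws  :: "'w \<Rightarrow> 'w set"
  Rel :: "'w \<Rightarrow> 'w \<Rightarrow> 'w \<Rightarrow> bool"   (* Rel M w u v  means  u preceq_w v *)
  Val :: "nat \<Rightarrow> 'w set"

function sat :: "'w cmodel \<Rightarrow> 'w \<Rightarrow> form \<Rightarrow> bool" where
  "sat M w (Var p) = (w \<in> Val M p)"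
| "sat M w Bot = False"
| "sat M w (Neg f) = (\<not> sat M w f)"
| "sat M w (And f g) = (sat M w f \<and> sat M w g)"
| "sat M w (Imp f g) = (sat M w f \<longrightarrow> sat M w g)"
| "sat M w (Pref f g) =
     (\<forall>u\<in>Ws M w. sat M u g \<longrightarrow> (\<exists>v\<in>Ws M w. sat M v f \<and> Rel M w v u))"
| "sat M w (Sq G f g) =
     (\<forall>u\<in>Ws M w. sat M u g \<longrightarrow> (\<exists>v\<in>Ws M w. sat M v f \<and>
        (let A = (\<lambda>x. set (filter (\<lambda>\<gamma>. sat M x \<gamma> = sat M w \<gamma>) G))
         in A u \<subset> A v \<or> (A u = A v \<and> Rel M w v u))))"
  by pat_completeness auto
termination
  by (relation "measure (\<lambda>(M, w, f). size f)")
     (auto simp: less_Suc_eq_le intro: trans_le_add1 size_list_estimation')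

definition agree :: "'w cmodel \<Rightarrow> form list \<Rightarrow> 'w \<Rightarrow> 'w \<Rightarrow> form set" where
  "agree M G u v = {\<gamma>\<in>set G. sat M u \<gamma> = sat M v \<gamma>}"

definition sqle :: "'w cmodel \<Rightarrow> form list \<Rightarrow> 'w \<Rightarrow> 'w \<Rightarrow> 'w \<Rightarrow> bool" where
  "sqle M G w u v =
     (agree M G v w \<subset> agree M G u w \<or> (agree M G v w = agree M G u w \<and> Rel M w u v))"

definition wf_preorder_on :: "'w set \<Rightarrow> ('w \<Rightarrow> 'w \<Rightarrow> bool) \<Rightarrow> bool" where
  "wf_preorder_on S r = wf {(u, v). u \<in> S \<and> v \<in> S \<and> r u v \<and> \<not> r v u}"

definition cond_model :: "'w cmodel \<Rightarrow> bool" where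
  "cond_model M \<longleftrightarrow>
     Wo M \<noteq> {} \<and>
     (\<forall>p. Val M p \<subseteq> Wo M) \<and>
     (\<forall>w\<in>Wo M. Ws M w \<subseteq> Wo M \<and> w \<in> Ws M w \<and>
        (\<forall>u\<in>Ws M w. Rel M w u u) \<and>
        (\<forall>u\<in>Ws M w. \<forall>v\<in>Ws M w. \<forall>x\<in>Ws M w. Rel M w u v \<longrightarrow> Rel M w v x \<longrightarrow> Rel M w u x) \<and>
        (\<forall>u\<in>Ws M w. \<forall>v\<in>Ws M w. Rel M w u v \<or> Rel M w v u) \<and>
        (\<forall>v\<in>Ws M w - {w}. Rel M w w v \<and> \<not> Rel M w v w))"

definition limit_assumption :: "'w cmodel \<Rightarrow> bool" where
  "limit_assumption M \<longleftrightarrow>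
     (\<forall>w\<in>Wo M. wf_preorder_on (Ws M w) (Rel M w) \<and>
        (\<forall>G. wf_preorder_on (Ws M w) (sqle M G w)))"

definition lit :: "bool \<Rightarrow> form \<Rightarrow> form" where
  "lit b g = (if b then g else Neg g)"

text \<open>Conjuncts of the element of Gamma^* determined by the sign vector s.\<close>
definition lits :: "form list \<Rightarrow> bool list \<Rightarrow> form list" where
  "lits G s = map2 lit s G"

text \<open>Gamma^*: all sign vectors of length |Gamma|.\<close>
definition signs :: "form list \<Rightarrow> bool list list" where
  "signs G = List.n_lists (length G) [True, False]"

text \<open>Subsets of gamma are enumerated as sublists; they are compared as sets of conjuncts.\<close>
definition inner :: "form \<Rightarrow> form \<Rightarrow> form list \<Rightarrow> form" where
  "inner f g ls =
     Conj (map (\<lambda>lam.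
        Imp (Conj (map (\<lambda>lam'. Neg (Dia (And f (Conj lam'))))
                       (filter (\<lambda>lam'. set lam \<subset> set lam') (subseqs ls))))
            (Pref (And f (Conj lam)) (And g (Conj lam))))
       (subseqs ls))"

definition translation :: "form list \<Rightarrow> form \<Rightarrow> form \<Rightarrow> form" where
  "translation G f g =
     Conj (map (\<lambda>s. Imp (Conj (lits G s)) (inner f g (lits G s))) (signs G))"

end

theory Submission
  imports Defs
begin

text \<open>Only the antecedent \<open>\<gamma>\<^sub>w \<in> \<Gamma>\<^sup>*\<close> true at \<open>w\<close> matters. Writing \<open>S u\<close> for the set
  of conjuncts of \<open>\<gamma>\<^sub>w\<close> true at \<open>u\<close>, the set \<open>A\<^sub>\<Gamma>(u,w)\<close> is determined by \<open>S u\<close>, so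
  \<open>v \<sqsubseteq>\<^sup>\<Gamma>\<^sub>w u\<close> means \<open>S u \<subset> S v\<close>, or \<open>S u = S v\<close> and \<open>v \<preceq>\<^sub>w u\<close>. A \<open>\<psi>\<close>-world \<open>u\<close> lacks a
  \<open>\<phi>\<close>-witness of the first kind exactly when no \<open>\<phi>\<close>-world realises a strict superset of
  \<open>\<lambda> = S u\<close>, and then a witness of the second kind is what \<open>(\<phi> \<and> \<lambda>) \<preceq> (\<psi> \<and> \<lambda>)\<close>
  provides.\<close>

lemma lex_witness_iff_maximal_witness:
  assumes S_bounded: "\<And>x. S x \<subseteq> B"
  shows "(\<forall>u\<in>W. Q u \<longrightarrow> (\<exists>v\<in>W. P v \<and> (S u \<subset> S v \<or> (S u = S v \<and> R v u)))) \<longleftrightarrow>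
    (\<forall>\<Lambda>\<subseteq>B. (\<forall>\<Lambda>'\<subseteq>B. \<Lambda> \<subset> \<Lambda>' \<longrightarrow> \<not> (\<exists>x\<in>W. P x \<and> \<Lambda>' \<subseteq> S x)) \<longrightarrow>
       (\<forall>u\<in>W. Q u \<and> \<Lambda> \<subseteq> S u \<longrightarrow> (\<exists>v\<in>W. P v \<and> \<Lambda> \<subseteq> S v \<and> R v u)))"
    (is "?lex \<longleftrightarrow> ?layered")
proof
  assume lex: ?lex
  show ?layered
  proof (intro allI impI ballI, elim conjE)
    fix \<Lambda> u
    assume maximal: "\<forall>\<Lambda>'\<subseteq>B. \<Lambda> \<subset> \<Lambda>' \<longrightarrow> \<not> (\<exists>x\<in>W. P x \<and> \<Lambda>' \<subseteq> S x)"
      and "u \<in> W" "Q u" and \<Lambda>_u: "\<Lambda> \<subseteq> S u"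
    obtain v where v: "v \<in> W" "P v" and lex_v: "S u \<subset> S v \<or> (S u = S v \<and> R v u)"
      using lex \<open>u \<in> W\<close> \<open>Q u\<close> by blast
    have "\<Lambda> \<subseteq> S v"
      using \<Lambda>_u lex_v by blast
    moreover have "\<not> \<Lambda> \<subset> S v"
      using maximal[rule_format, OF S_bounded] v by blast
    ultimately have "\<Lambda> = S v"
      by blast
    with \<Lambda>_u lex_v have "R v u"
      by blast
    with v \<open>\<Lambda> = S v\<close> show "\<exists>v\<in>W. P v \<and> \<Lambda> \<subseteq> S v \<and> R v u"
      by blast
  qed
next
  assume layered: ?layered
  show ?lex
  proof (intro ballI impI)
    fix u assume "u \<in> W" "Q u"
    show "\<exists>v\<in>W. P v \<and> (S u \<subset> S v \<or> (S u = S v \<and> R v u))"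
    proof (cases "\<exists>v\<in>W. P v \<and> S u \<subset> S v")
      case False
      then have "\<forall>\<Lambda>'\<subseteq>B. S u \<subset> \<Lambda>' \<longrightarrow> \<not> (\<exists>x\<in>W. P x \<and> \<Lambda>' \<subseteq> S x)"
        by blast
      then have "\<exists>v\<in>W. P v \<and> S u \<subseteq> S v \<and> R v u"
        using layered[rule_format, OF S_bounded] \<open>u \<in> W\<close> \<open>Q u\<close> by blast
      with False show ?thesis
        by blast
    qed blast
  qed
qed

lemma sat_Conj: "sat M x (Conj xs) \<longleftrightarrow> (\<forall>a\<in>set xs. sat M x a)"
  by (induction xs) (auto simp: Conj_def Top_def)

lemma sat_Dia: "sat M x (Dia h) \<longleftrightarrow> (\<exists>u\<in>Ws M x. sat M u h)"
  by (auto simp: Dia_def Prec_def)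

lemma sat_lit: "sat M x (lit b g) \<longleftrightarrow> (sat M x g \<longleftrightarrow> b)"
  by (cases b) (auto simp: lit_def)

lemma sat_Conj_lits_iff:
  assumes "length s = length G"
  shows "sat M w (Conj (lits G s)) \<longleftrightarrow> s = map (sat M w) G"
  using assms by (induction s G rule: list_induct2) (auto simp: lits_def sat_Conj sat_lit)

lemma set_lits_map: "set (lits G (map h G)) = (\<lambda>\<gamma>. lit (h \<gamma>) \<gamma>) ` set G"
  by (induction G) (auto simp: lits_def)

lemma sat_translation_iff:
  "sat M w (translation G f g) \<longleftrightarrow> sat M w (inner f g (lits G (map (sat M w) G)))"
proof -
  have signs_w: "map (sat M w) G \<in> set (signs G)"
    by (auto simp: signs_def set_n_lists)
  have "\<And>s. s \<in> set (signs G) \<Longrightarrow> sat M w (Conj (lits G s)) \<longleftrightarrow> s = map (sat M w) G"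
    by (rule sat_Conj_lits_iff) (simp add: signs_def set_n_lists)
  then show ?thesis
    using signs_w by (auto simp: translation_def sat_Conj)
qed

lemma sat_inner_iff:
  fixes M :: "'w cmodel" and ls :: "form list"
  defines "S \<equiv> \<lambda>x. {a \<in> set ls. sat M x a}"
  shows "sat M w (inner f g ls) \<longleftrightarrow>
    (\<forall>\<Lambda>\<subseteq>set ls.
       (\<forall>\<Lambda>'\<subseteq>set ls. \<Lambda> \<subset> \<Lambda>' \<longrightarrow> \<not> (\<exists>x\<in>Ws M w. sat M x f \<and> \<Lambda>' \<subseteq> S x)) \<longrightarrow>
       (\<forall>u\<in>Ws M w. sat M u g \<and> \<Lambda> \<subseteq> S u \<longrightarrow> (\<exists>v\<in>Ws M w. sat M v f \<and> \<Lambda> \<subseteq> S v \<and> Rel M w v u)))"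
proof -
  have Conj_iff: "sat M x (Conj T) \<longleftrightarrow> set T \<subseteq> S x" if "T \<in> set (subseqs ls)" for x T
    using that subseqs_powset[of ls] by (auto simp: sat_Conj S_def)
  have "sat M w (inner f g ls) \<longleftrightarrow>
    (\<forall>\<Lambda>\<in>set ` set (subseqs ls).
       (\<forall>\<Lambda>'\<in>set ` set (subseqs ls). \<Lambda> \<subset> \<Lambda>' \<longrightarrow> \<not> (\<exists>x\<in>Ws M w. sat M x f \<and> \<Lambda>' \<subseteq> S x)) \<longrightarrow>
       (\<forall>u\<in>Ws M w. sat M u g \<and> \<Lambda> \<subseteq> S u \<longrightarrow>
          (\<exists>v\<in>Ws M w. sat M v f \<and> \<Lambda> \<subseteq> S v \<and> Rel M w v u)))"
    by (auto simp: inner_def sat_Conj[of M w "map _ _"] sat_Dia Conj_iff)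
  then show ?thesis
    unfolding subseqs_powset by (simp add: Ball_def)
qed

lemma sat_Sq_iff_sqle:
  "sat M w (Sq G f g) \<longleftrightarrow>
     (\<forall>u\<in>Ws M w. sat M u g \<longrightarrow> (\<exists>v\<in>Ws M w. sat M v f \<and> sqle M G w v u))"
  by (simp add: sqle_def agree_def Let_def)

lemma agree_subset_iff_lits_subset:
  fixes M :: "'w cmodel" and G :: "form list" and w :: 'w
  defines "S \<equiv> \<lambda>x. {a \<in> set (lits G (map (sat M w) G)). sat M x a}"
  shows "agree M G x w \<subseteq> agree M G y w \<longleftrightarrow> S x \<subseteq> S y"
proof -
  define lw where "lw = (\<lambda>\<gamma>. lit (sat M w \<gamma>) \<gamma>)"
  have sat_lw: "sat M z (lw \<gamma>) \<longleftrightarrow> (sat M z \<gamma> \<longleftrightarrow> sat M w \<gamma>)" for z \<gamma>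
    by (simp add: lw_def sat_lit)
  have set_lits: "set (lits G (map (sat M w) G)) = lw ` set G"
    by (simp add: set_lits_map lw_def)
  have S_image: "S z = lw ` agree M G z w" for z
    by (auto simp: S_def set_lits agree_def sat_lw)
  have agree_preimage: "agree M G z w = {\<gamma> \<in> set G. lw \<gamma> \<in> S z}" for z
    by (auto simp: S_def set_lits agree_def sat_lw)
  show ?thesis
  proof
    assume "agree M G x w \<subseteq> agree M G y w"
    then show "S x \<subseteq> S y"
      unfolding S_image by (rule image_mono)
  next
    assume "S x \<subseteq> S y"
    then show "agree M G x w \<subseteq> agree M G y w"
      unfolding agree_preimage by blast
  qed
qed

lemma sqle_iff_lits:
  fixes M :: "'w cmodel" and G :: "form list" and w :: 'w
  defines "S \<equiv> \<lambda>x. {a \<in> set (lits G (map (sat M w) G)). sat M x a}"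
  shows "sqle M G w v u \<longleftrightarrow> S u \<subset> S v \<or> (S u = S v \<and> Rel M w v u)"
  unfolding sqle_def psubset_eq set_eq_subset agree_subset_iff_lits_subset S_def ..

theorem mainTheorem7:
  fixes M :: "'w cmodel" and w :: 'w and f g :: form and G :: "form list"
  assumes "cond_model M" and "limit_assumption M" and "w \<in> Wo M"
  shows "sat M w (Sq G f g) \<longleftrightarrow> sat M w (translation G f g)"
proof -
  define L where "L = lits G (map (sat M w) G)"
  define S where "S = (\<lambda>x. {a \<in> set L. sat M x a})"
  have "sat M w (Sq G f g) \<longleftrightarrow>
    (\<forall>u\<in>Ws M w. sat M u g \<longrightarrow>
       (\<exists>v\<in>Ws M w. sat M v f \<and> (S u \<subset> S v \<or> (S u = S v \<and> Rel M w v u))))"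
    by (simp only: sat_Sq_iff_sqle sqle_iff_lits S_def L_def)
  also have "\<dots> \<longleftrightarrow> sat M w (inner f g L)"
    using lex_witness_iff_maximal_witness[of S "set L"] by (simp add: sat_inner_iff S_def)
  also have "\<dots> \<longleftrightarrow> sat M w (translation G f g)"
    by (simp add: sat_translation_iff L_def)
  finally show ?thesis .
qed

end
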